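(* Consider the two-user scalar fading multiple access channel and the Stackelberg game described in the context. For every pair $(\mu_1,\mu_2)$ with $0\le\mu_1<\infty$, $0\le\mu_2<\infty$ and every $\epsilon>0$, an $\epsilon$-Stackelberg strategy exists.
   Context: Channel: $y=\sqrt{h_1}x_1+\sqrt{h_2}x_2+z$, noise variance $\sigma^2>0$; the fading $\mathbf h=(h_1,h_2)$ is stationary ergodic with a stationary distribution on $(0,\infty)^2$ having a continuous bounded density $f$; channel state is known everywhere. User $i$ has power budget $\bar P_i>0$ and feasible set $\mathcal F_i$ of measurable $\mathcal P_i\ge0$ with $E[\mathcal P_i(\mathbf h)]\le\bar P_i$. Stackelberg game: the base station (leader) announces a measurable set $D_1\subseteq(0,\infty)^2$; it then decodes user 1 first on $D_1$ and user 2 first on $D_1^c$. The users then play the low-level game with payoffs $\bar R_1(D_1,\mathcal P_1,\mathcal P_2)=\iint\tfrac12\log_2\Big(1+\frac{\mathcal P_1h_1}{\sigma^2+\mathcal P_2h_2I_{\{(h_1,h_2)\in D_1\}}}\Big)f\,dh_1dh_2$, $\bar R_2(D_1,\mathcal P_1,\mathcal P_2)=\iint\tfrac12\log_2\Big(1+\frac{\mathcal P_2h_2}{\sigma^2+\mathcal P_1h_1I_{\{(h_1,h_2)\in D_1^c\}}}\Big)f\,dh_1dh_2$. For each $D_1$ this low-level game has a unique admissible Nash equilibrium $(\mathcal P_{1D_1},\mathcal P_{2D_1})$ (a Nash equilibrium not Pareto-dominated in payoffs by another Nash equilibrium). The base station's payoff is $J(D_1)=\mu_1\bar R_1(D_1,\mathcal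 P_{1D_1},\mathcal P_{2D_1})+\mu_2\bar R_2(D_1,\mathcal P_{1D_1},\mathcal P_{2D_1})$. Let $R^*=\sup_{D_1}J(D_1)$. For $\epsilon>0$, a strategy $D_{1,\epsilon}^*$ is an $\epsilon$-Stackelberg strategy if $J(D_{1,\epsilon}^* )\ge R^*-\epsilon$. *)

theory Defs
  imports "HOL-Analysis.Analysis"
begin

definition fading_space :: "(real \<times> real) set" where
  "fading_space = {0<..} \<times> {0<..}"

definition fading_measure :: "(real \<times> real \<Rightarrow> real) \<Rightarrow> (real \<times> real) measure" where
  "fading_measure f = density lborel (\<lambda>h. ennreal (f h) * indicator fading_space h)"

definition feasible :: "(real \<times> real \<Rightarrow> real) \<Rightarrow> real \<Rightarrow> (real \<times> real \<Rightarrow> real) set" where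
  "feasible f Pbar = {P. P \<in> borel_measurable borel \<and> (\<forall>h. 0 \<le> P h) \<and>
      (\<integral>\<^sup>+ h. ennreal (P h) \<partial>fading_measure f) \<le> ennreal Pbar}"

definition bs_strategies :: "(real \<times> real) set set" where
  "bs_strategies = {D. D \<in> sets borel \<and> D \<subseteq> fading_space}"

definition rate1 :: "(real \<times> real \<Rightarrow> real) \<Rightarrow> real \<Rightarrow> (real \<times> real) set
    \<Rightarrow> (real \<times> real \<Rightarrow> real) \<Rightarrow> (real \<times> real \<Rightarrow> real) \<Rightarrow> ennreal" where
  "rate1 f \<sigma>2 D P1 P2 = (\<integral>\<^sup>+ h. ennreal (1/2 * log 2 (1 + P1 h * fst h /
      (\<sigma>2 + P2 h * snd h * indicator D h))) \<partial>fading_measure f)"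

definition rate2 :: "(real \<times> real \<Rightarrow> real) \<Rightarrow> real \<Rightarrow> (real \<times> real) set
    \<Rightarrow> (real \<times> real \<Rightarrow> real) \<Rightarrow> (real \<times> real \<Rightarrow> real) \<Rightarrow> ennreal" where
  "rate2 f \<sigma>2 D P1 P2 = (\<integral>\<^sup>+ h. ennreal (1/2 * log 2 (1 + P2 h * snd h /
      (\<sigma>2 + P1 h * fst h * indicator (- D) h))) \<partial>fading_measure f)"

definition is_NE :: "(real \<times> real \<Rightarrow> real) \<Rightarrow> real \<Rightarrow> real \<Rightarrow> real \<Rightarrow> (real \<times> real) set
    \<Rightarrow> (real \<times> real \<Rightarrow> real) \<Rightarrow> (real \<times> real \<Rightarrow> real) \<Rightarrow> bool" where
  "is_NE f \<sigma>2 Pbar1 Pbar2 D P1 P2 \<longleftrightarrow>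
     P1 \<in> feasible f Pbar1 \<and> P2 \<in> feasible f Pbar2 \<and>
     (\<forall>Q1 \<in> feasible f Pbar1. rate1 f \<sigma>2 D Q1 P2 \<le> rate1 f \<sigma>2 D P1 P2) \<and>
     (\<forall>Q2 \<in> feasible f Pbar2. rate2 f \<sigma>2 D P1 Q2 \<le> rate2 f \<sigma>2 D P1 P2)"

definition admissible_NE :: "(real \<times> real \<Rightarrow> real) \<Rightarrow> real \<Rightarrow> real \<Rightarrow> real \<Rightarrow> (real \<times> real) set
    \<Rightarrow> (real \<times> real \<Rightarrow> real) \<Rightarrow> (real \<times> real \<Rightarrow> real) \<Rightarrow> bool" where
  "admissible_NE f \<sigma>2 Pbar1 Pbar2 D P1 P2 \<longleftrightarrow>
     is_NE f \<sigma>2 Pbar1 Pbar2 D P1 P2 \<and>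
     \<not> (\<exists>Q1 Q2. is_NE f \<sigma>2 Pbar1 Pbar2 D Q1 Q2 \<and>
          rate1 f \<sigma>2 D P1 P2 \<le> rate1 f \<sigma>2 D Q1 Q2 \<and>
          rate2 f \<sigma>2 D P1 P2 \<le> rate2 f \<sigma>2 D Q1 Q2 \<and>
          (rate1 f \<sigma>2 D P1 P2 < rate1 f \<sigma>2 D Q1 Q2 \<or>
           rate2 f \<sigma>2 D P1 P2 < rate2 f \<sigma>2 D Q1 Q2))"

end

theory Submission
  imports Defs
begin

text \<open>Interference only lowers a user's rate, so each rate is bounded by the user's
  interference-free capacity. Conversely, decoding user 1 first everywhere
  (\<open>D = {}\<close>) leaves it interference-free, and at a Nash equilibrium it then best responds
  and attains its capacity; symmetrically for user 2 and \<open>D = (0,\<infinity>)\<^sup>2\<close>. Hence the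
  leader's payoff is squeezed between \<open>\<mu>\<^sub>1 C\<^sub>1 + \<mu>\<^sub>2 C\<^sub>2\<close> and the payoffs of these two
  strategies, so an infinite supremum is attained, while a finite one is
  \<open>\<epsilon>\<close>-approximated by the definition of the supremum.\<close>

lemma ennreal_SUP_approx_dominated:
  fixes J :: "'a \<Rightarrow> ennreal" and \<epsilon> :: real
  assumes bound: "\<And>x. x \<in> A \<Longrightarrow> J x \<le> u + v"
    and a: "a \<in> A" "u \<le> J a" and b: "b \<in> A" "v \<le> J b"
    and \<epsilon>_pos: "0 < \<epsilon>"
  shows "\<exists>x\<in>A. (SUP x\<in>A. J x) - ennreal \<epsilon> \<le> J x"
proof (cases "(SUP x\<in>A. J x) = top")
  case True
  have "(SUP x\<in>A. J x) \<le> u + v" using bound by (rule SUP_least)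
  then have "u + v = top" unfolding True by (rule top_unique[THEN iffD1])
  then have "J a = top \<or> J b = top"
    using a(2) b(2) by (auto simp: top_unique)
  then show ?thesis using a(1) b(1) by (metis top_greatest)
next
  case False
  then obtain x where x: "x \<in> A" "(SUP x\<in>A. J x) < J x + ennreal \<epsilon>"
    using SUP_approx_ennreal[OF \<epsilon>_pos _ refl False[folded infinity_ennreal_def]] a(1) by blast
  then have "(SUP x\<in>A. J x) \<le> ennreal \<epsilon> + J x" by (simp add: add.commute)
  then show ?thesis using x(1) by (auto simp: ennreal_minus_le_iff)
qed

lemma log2_one_plus_div_antimono:
  fixes x s t :: real
  assumes "0 \<le> x" "0 < s" "s \<le> t"
  shows "log 2 (1 + x / t) \<le> log 2 (1 + x / s)"
proof -
  have "x / t \<le> x / s" using assms by (intro divide_left_mono) auto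
  moreover have "0 \<le> x / t" using assms by simp
  ultimately show ?thesis by (subst log_le_cancel_iff) auto
qed

lemma open_fading_space: "open fading_space"
  unfolding fading_space_def by (intro open_Times open_greaterThan)

lemma fading_space_in_bs_strategies: "fading_space \<in> bs_strategies"
  unfolding bs_strategies_def using open_fading_space by auto

lemma AE_in_fading_space:
  assumes "continuous_on fading_space f"
  shows "AE h in fading_measure f. h \<in> fading_space"
proof -
  have "(\<lambda>h. indicator fading_space h *\<^sub>R f h) \<in> borel_measurable borel"
    using open_fading_space assms by (intro borel_measurable_continuous_on_indicator) auto
  moreover have "(\<lambda>h. ennreal (f h) * indicator fading_space h)
      = (\<lambda>h. ennreal (indicator fading_space h *\<^sub>R f h))"
    by (auto simp: fun_eq_iff split: split_indicator)
  ultimately have "(\<lambda>h. ennreal (f h) * indicator fading_space h) \<in> borel_measurable lborel"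
    by (simp add: measurable_lborel1)
  then show ?thesis unfolding fading_measure_def
    by (subst AE_density) (auto split: split_indicator)
qed

definition single_user_rate :: "(real \<times> real \<Rightarrow> real) \<Rightarrow> real \<Rightarrow> (real \<times> real \<Rightarrow> real)
    \<Rightarrow> (real \<times> real \<Rightarrow> real) \<Rightarrow> ennreal" where
  "single_user_rate f \<sigma>2 g P =
     (\<integral>\<^sup>+ h. ennreal (1/2 * log 2 (1 + P h * g h / \<sigma>2)) \<partial>fading_measure f)"

definition single_user_capacity :: "(real \<times> real \<Rightarrow> real) \<Rightarrow> real \<Rightarrow> (real \<times> real \<Rightarrow> real)
    \<Rightarrow> real \<Rightarrow> ennreal" where
  "single_user_capacity f \<sigma>2 g Pbar = (SUP P \<in> feasible f Pbar. single_user_rate f \<sigma>2 g P)"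

lemma rate1_le_single_user_rate:
  assumes "continuous_on fading_space f" "0 < \<sigma>2" "\<And>h. 0 \<le> P1 h" "\<And>h. 0 \<le> P2 h"
  shows "rate1 f \<sigma>2 D P1 P2 \<le> single_user_rate f \<sigma>2 fst P1"
  unfolding rate1_def single_user_rate_def
  using AE_in_fading_space[OF assms(1)]
proof (intro nn_integral_mono_AE, eventually_elim)
  case (elim h)
  then have "0 < fst h" "0 < snd h" by (auto simp: fading_space_def)
  then have signal: "0 \<le> P1 h * fst h" and interference: "0 \<le> P2 h * snd h * indicator D h"
    using assms(3)[of h] assms(4)[of h] by (simp_all add: indicator_def)
  have "log 2 (1 + P1 h * fst h / (\<sigma>2 + P2 h * snd h * indicator D h))
      \<le> log 2 (1 + P1 h * fst h / \<sigma>2)"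
    using interference by (intro log2_one_plus_div_antimono[OF signal assms(2)]) simp
  then show ?case by (intro ennreal_leI) simp
qed

lemma rate2_le_single_user_rate:
  assumes "continuous_on fading_space f" "0 < \<sigma>2" "\<And>h. 0 \<le> P1 h" "\<And>h. 0 \<le> P2 h"
  shows "rate2 f \<sigma>2 D P1 P2 \<le> single_user_rate f \<sigma>2 snd P2"
  unfolding rate2_def single_user_rate_def
  using AE_in_fading_space[OF assms(1)]
proof (intro nn_integral_mono_AE, eventually_elim)
  case (elim h)
  then have "0 < fst h" "0 < snd h" by (auto simp: fading_space_def)
  then have signal: "0 \<le> P2 h * snd h" and interference: "0 \<le> P1 h * fst h * indicator (- D) h"
    using assms(3)[of h] assms(4)[of h] by (simp_all add: indicator_def)
  have "log 2 (1 + P2 h * snd h / (\<sigma>2 + P1 h * fst h * indicator (- D) h))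
      \<le> log 2 (1 + P2 h * snd h / \<sigma>2)"
    using interference by (intro log2_one_plus_div_antimono[OF signal assms(2)]) simp
  then show ?case by (intro ennreal_leI) simp
qed

lemma rate1_empty: "rate1 f \<sigma>2 {} P1 P2 = single_user_rate f \<sigma>2 fst P1"
  unfolding rate1_def single_user_rate_def by simp

lemma rate2_fading_space:
  assumes "continuous_on fading_space f"
  shows "rate2 f \<sigma>2 fading_space P1 P2 = single_user_rate f \<sigma>2 snd P2"
  unfolding rate2_def single_user_rate_def
  using AE_in_fading_space[OF assms]
  by (intro nn_integral_cong_AE) (auto simp: indicator_def)

lemma NE_rate1_le_capacity:
  assumes "continuous_on fading_space f" "0 < \<sigma>2" "is_NE f \<sigma>2 Pbar1 Pbar2 D P1 P2"
  shows "rate1 f \<sigma>2 D P1 P2 \<le> single_user_capacity f \<sigma>2 fst Pbar1"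
proof -
  have "P1 \<in> feasible f Pbar1" "P2 \<in> feasible f Pbar2"
    using assms(3) by (auto simp: is_NE_def)
  then have "rate1 f \<sigma>2 D P1 P2 \<le> single_user_rate f \<sigma>2 fst P1"
    "single_user_rate f \<sigma>2 fst P1 \<le> single_user_capacity f \<sigma>2 fst Pbar1"
    using assms(1,2) unfolding single_user_capacity_def
    by (auto simp: feasible_def intro: rate1_le_single_user_rate SUP_upper)
  then show ?thesis by (rule order_trans)
qed

lemma NE_rate2_le_capacity:
  assumes "continuous_on fading_space f" "0 < \<sigma>2" "is_NE f \<sigma>2 Pbar1 Pbar2 D P1 P2"
  shows "rate2 f \<sigma>2 D P1 P2 \<le> single_user_capacity f \<sigma>2 snd Pbar2"
proof -
  have "P1 \<in> feasible f Pbar1" "P2 \<in> feasible f Pbar2"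
    using assms(3) by (auto simp: is_NE_def)
  then have "rate2 f \<sigma>2 D P1 P2 \<le> single_user_rate f \<sigma>2 snd P2"
    "single_user_rate f \<sigma>2 snd P2 \<le> single_user_capacity f \<sigma>2 snd Pbar2"
    using assms(1,2) unfolding single_user_capacity_def
    by (auto simp: feasible_def intro: rate2_le_single_user_rate SUP_upper)
  then show ?thesis by (rule order_trans)
qed

lemma NE_empty_rate1_attains_capacity:
  assumes "is_NE f \<sigma>2 Pbar1 Pbar2 {} P1 P2"
  shows "single_user_capacity f \<sigma>2 fst Pbar1 \<le> rate1 f \<sigma>2 {} P1 P2"
  unfolding single_user_capacity_def
proof (rule SUP_least)
  fix Q assume "Q \<in> feasible f Pbar1"
  then have "rate1 f \<sigma>2 {} Q P2 \<le> rate1 f \<sigma>2 {} P1 P2"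
    using assms by (auto simp: is_NE_def)
  then show "single_user_rate f \<sigma>2 fst Q \<le> rate1 f \<sigma>2 {} P1 P2"
    by (simp add: rate1_empty)
qed

lemma NE_fading_space_rate2_attains_capacity:
  assumes "continuous_on fading_space f" "is_NE f \<sigma>2 Pbar1 Pbar2 fading_space P1 P2"
  shows "single_user_capacity f \<sigma>2 snd Pbar2 \<le> rate2 f \<sigma>2 fading_space P1 P2"
  unfolding single_user_capacity_def
proof (rule SUP_least)
  fix Q assume "Q \<in> feasible f Pbar2"
  then have "rate2 f \<sigma>2 fading_space P1 Q \<le> rate2 f \<sigma>2 fading_space P1 P2"
    using assms(2) by (auto simp: is_NE_def)
  then show "single_user_rate f \<sigma>2 snd Q \<le> rate2 f \<sigma>2 fading_space P1 P2"
    by (simp add: rate2_fading_space[OF assms(1)])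
qed

theorem corollary1:
  fixes f :: "real \<times> real \<Rightarrow> real"
    and \<sigma>2 Pbar1 Pbar2 \<mu>1 \<mu>2 \<epsilon> :: real
    and eq1 eq2 :: "(real \<times> real) set \<Rightarrow> real \<times> real \<Rightarrow> real"
  assumes f_nonneg: "\<forall>h \<in> fading_space. 0 \<le> f h"
    and f_cont: "continuous_on fading_space f"
    and f_bdd: "bounded (f ` fading_space)"
    and f_prob: "emeasure (fading_measure f) (space (fading_measure f)) = 1"
    and \<sigma>2_pos: "\<sigma>2 > 0"
    and Pbar1_pos: "Pbar1 > 0" and Pbar2_pos: "Pbar2 > 0"
    and unique_admissible_NE: "\<forall>D \<in> bs_strategies.
        admissible_NE f \<sigma>2 Pbar1 Pbar2 D (eq1 D) (eq2 D) \<and>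
        (\<forall>Q1 Q2. admissible_NE f \<sigma>2 Pbar1 Pbar2 D Q1 Q2 \<longrightarrow>
           (AE h in fading_measure f. Q1 h = eq1 D h \<and> Q2 h = eq2 D h))"
    and \<mu>1_nonneg: "0 \<le> \<mu>1" and \<mu>2_nonneg: "0 \<le> \<mu>2"
    and \<epsilon>_pos: "\<epsilon> > 0"
  shows "\<exists>D \<in> bs_strategies.
     ennreal \<mu>1 * rate1 f \<sigma>2 D (eq1 D) (eq2 D) + ennreal \<mu>2 * rate2 f \<sigma>2 D (eq1 D) (eq2 D)
     \<ge> (SUP D' \<in> bs_strategies. ennreal \<mu>1 * rate1 f \<sigma>2 D' (eq1 D') (eq2 D')
                                + ennreal \<mu>2 * rate2 f \<sigma>2 D' (eq1 D') (eq2 D')) - ennreal \<epsilon>"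
proof -
  define J where "J D = ennreal \<mu>1 * rate1 f \<sigma>2 D (eq1 D) (eq2 D)
    + ennreal \<mu>2 * rate2 f \<sigma>2 D (eq1 D) (eq2 D)" for D
  define C1 where "C1 = single_user_capacity f \<sigma>2 fst Pbar1"
  define C2 where "C2 = single_user_capacity f \<sigma>2 snd Pbar2"
  have NE: "is_NE f \<sigma>2 Pbar1 Pbar2 D (eq1 D) (eq2 D)" if "D \<in> bs_strategies" for D
    using unique_admissible_NE that by (auto simp: admissible_NE_def)
  have empty_in: "{} \<in> bs_strategies" by (simp add: bs_strategies_def)
  have bound: "J D \<le> ennreal \<mu>1 * C1 + ennreal \<mu>2 * C2" if "D \<in> bs_strategies" for D
    unfolding J_def C1_def C2_def using NE[OF that] f_cont \<sigma>2_pos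
    by (intro add_mono mult_left_mono NE_rate1_le_capacity NE_rate2_le_capacity) auto
  have empty: "ennreal \<mu>1 * C1 \<le> J {}"
    unfolding J_def C1_def using NE[OF empty_in]
    by (intro add_increasing2 mult_left_mono NE_empty_rate1_attains_capacity) auto
  have full: "ennreal \<mu>2 * C2 \<le> J fading_space"
    unfolding J_def C2_def using NE[OF fading_space_in_bs_strategies] f_cont
    by (intro add_increasing mult_left_mono NE_fading_space_rate2_attains_capacity) auto
  from ennreal_SUP_approx_dominated[OF bound empty_in empty fading_space_in_bs_strategies full \<epsilon>_pos]
  show ?thesis unfolding J_def .
qed

end
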